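(* Let $(a_i)_{i\ge0}$ be a sequence in $[0,\infty]$ and $(s_i)_{i\ge0}$ a sequence in $[0,\infty)$. Put $y_i=1+\sum_{j\le i}a_j$, $t_i=\sum_{j<i}s_j$ (for $i\in\mathbb{N}\cup\{\infty\}$) and $I=\inf\{i:y_i=\infty\}$ (with $\inf\emptyset=\infty$). Suppose there is $c>0$ such that for every $i$, $a_{i+1}\ge c\,y_i^2s_i/2$ and $s_i\le1/y_i$. Then $t_I\le2+4/c$.
   Context: Elementary deterministic statement about real sequences; conventions $1/\infty=0$ and $\inf\emptyset=\infty$. *)

theory Defs
  imports "HOL-Analysis.Analysis" "HOL-Library.Extended_Nat"
begin

definition yseq :: "(nat \<Rightarrow> ennreal) \<Rightarrow> nat \<Rightarrow> ennreal" where
  "yseq a i = 1 + (\<Sum>j\<le>i. a j)"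

definition Iblow :: "(nat \<Rightarrow> ennreal) \<Rightarrow> enat" where
  "Iblow a = Inf {enat i | i. yseq a i = \<infinity>}"

definition tseq :: "(nat \<Rightarrow> real) \<Rightarrow> enat \<Rightarrow> ennreal" where
  "tseq s n = (\<Sum>j. if enat j < n then ennreal (s j) else 0)"

end

theory Submission
  imports Defs
begin

text \<open>With u_i = 1/y_i, which lies in [0,1] and vanishes once y_i is infinite, every step
satisfies s_i \<le> (2 + 4/c)(u_i - u_{i+1}): if y_{i+1} \<le> 2 y_i then
u_i - u_{i+1} = a_{i+1}/(y_i y_{i+1}) \<ge> a_{i+1}/(2 y_i^2) \<ge> c s_i/4, and otherwise
u_i - u_{i+1} \<ge> u_i/2 \<ge> s_i/2. Telescoping bounds every partial sum of the s_i by
(2 + 4/c) u_0 \<le> 2 + 4/c, hence also t_I \<le> t_\<infinity>.\<close>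

lemma decrement_inverse_ge_real:
  fixes Y A s c :: real
  assumes "Y \<ge> 1" "A \<ge> 0" "c > 0" "A \<ge> c * Y^2 * s / 2" "s \<le> 1 / Y"
  shows "s \<le> (2 + 4 / c) * (1 / Y - 1 / (Y + A))"
proof -
  have Y_pos: "Y > 0" using assms(1) by simp
  have diff: "1 / Y - 1 / (Y + A) = A / (Y * (Y + A))"
    using Y_pos assms(2) by (simp add: field_simps)
  show ?thesis
  proof (cases "Y + A \<le> 2 * Y")
    case True
    have "A / (Y * (Y + A)) \<ge> A / (2 * Y^2)"
      using True Y_pos assms(2)
      by (intro divide_left_mono) (auto simp: power2_eq_square intro!: mult_pos_pos)
    moreover have "A / (2 * Y^2) \<ge> c * s / 4"
      using assms(4) Y_pos by (simp add: field_simps power2_eq_square)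
    ultimately have "A / (Y * (Y + A)) \<ge> c * s / 4" by linarith
    hence "(4 / c) * (A / (Y * (Y + A))) \<ge> (4 / c) * (c * s / 4)"
      using assms(3) by (intro mult_left_mono) auto
    hence "(4 / c) * (A / (Y * (Y + A))) \<ge> s" using assms(3) by simp
    moreover have "A / (Y * (Y + A)) \<ge> 0" using Y_pos assms(2) by simp
    ultimately show ?thesis unfolding diff distrib_right by linarith
  next
    case False
    have "1 / (Y + A) \<le> 1 / (2 * Y)" using False Y_pos by (intro divide_left_mono) auto
    hence half: "1 / Y - 1 / (Y + A) \<ge> 1 / (2 * Y)" by (simp add: field_simps)
    have "0 \<le> 1 / (2 * Y)" using Y_pos by simp
    with half have "1 / Y - 1 / (Y + A) \<ge> 0" by linarith
    then have "(4 / c) * (1 / Y - 1 / (Y + A)) \<ge> 0" using assms(3) by simp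
    moreover have "2 * (1 / Y - 1 / (Y + A)) \<ge> 1 / Y" using half by (simp add: field_simps)
    ultimately show ?thesis using assms(5) by (simp add: algebra_simps)
  qed
qed

lemma enn2real_inverse_ennreal:
  assumes "Y \<ge> 1"
  shows "enn2real (1 / ennreal Y) = 1 / Y"
proof -
  have "ennreal 1 / ennreal Y = ennreal (1 / Y)" using assms by (intro divide_ennreal) auto
  thus ?thesis using assms by (simp add: ennreal_1)
qed

lemma decrement_inverse_ge_ennreal:
  fixes y a :: ennreal and s c :: real
  assumes y_ge: "y \<ge> 1" and "s \<ge> 0" "c > 0"
    and a_ge: "a \<ge> ennreal c * y\<^sup>2 * ennreal s / 2"
    and s_le: "ennreal s \<le> 1 / y"
  shows "s \<le> (2 + 4 / c) * (enn2real (1 / y) - enn2real (1 / (y + a)))"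
proof (cases "y = \<infinity>")
  case True
  then have "s = 0" using s_le \<open>s \<ge> 0\<close> by simp
  with True show ?thesis by simp
next
  case False
  then obtain Y where y: "y = ennreal Y" and Y_ge: "Y \<ge> 1"
    using y_ge by (cases y) (auto simp flip: ennreal_1)
  have s_le_Y: "s \<le> 1 / Y"
    using s_le Y_ge by (simp add: y divide_ennreal flip: ennreal_1)
  show ?thesis
  proof (cases "a = \<infinity>")
    case True
    have "1 * (1 / Y) \<le> (2 + 4 / c) * (1 / Y)"
      using Y_ge \<open>c > 0\<close> by (intro mult_right_mono) auto
    with s_le_Y have "s \<le> (2 + 4 / c) * (1 / Y)" by simp
    with True show ?thesis by (simp add: y enn2real_inverse_ennreal[OF Y_ge])
  next
    case False
    then obtain A where a: "a = ennreal A" and "A \<ge> 0" by (cases a) auto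
    have "ennreal c * y\<^sup>2 * ennreal s = ennreal (c * Y^2 * s)"
      using \<open>c > 0\<close> \<open>s \<ge> 0\<close> Y_ge by (simp add: y ennreal_power ennreal_mult)
    then have "ennreal c * y\<^sup>2 * ennreal s / 2 = ennreal (c * Y^2 * s / 2)"
      using \<open>c > 0\<close> \<open>s \<ge> 0\<close> by (simp add: ennreal_divide_numeral)
    with a_ge have "c * Y^2 * s / 2 \<le> A" using \<open>A \<ge> 0\<close> by (simp add: a)
    from decrement_inverse_ge_real[OF Y_ge \<open>A \<ge> 0\<close> \<open>c > 0\<close> this s_le_Y]
    show ?thesis
      using Y_ge \<open>A \<ge> 0\<close>
      by (simp add: y a enn2real_inverse_ennreal flip: ennreal_plus)
  qed
qed

lemma sum_le_telescope:
  fixes s u :: "nat \<Rightarrow> real"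
  assumes "\<And>i. s i \<le> K * (u i - u (Suc i))"
  shows "(\<Sum>j<n. s j) \<le> K * (u 0 - u n)"
proof -
  have "(\<Sum>j<n. s j) \<le> (\<Sum>j<n. K * (u j - u (Suc j)))" using assms by (rule sum_mono)
  also have "\<dots> = K * (u 0 - u n)" by (simp add: sum_distrib_left[symmetric] sum_lessThan_telescope')
  finally show ?thesis .
qed

lemma tseq_le_suminf: "tseq s n \<le> (\<Sum>j. ennreal (s j))"
  unfolding tseq_def by (intro suminf_le summableI) auto

lemma yseq_ge_1: "yseq a i \<ge> 1"
  unfolding yseq_def by simp

lemma yseq_Suc: "yseq a (Suc i) = yseq a i + a (Suc i)"
  unfolding yseq_def by (simp add: add.assoc)

lemma enn2real_inverse_yseq_le_1: "enn2real (1 / yseq a i) \<le> 1"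
proof -
  have "1 / yseq a i \<le> 1"
    using yseq_ge_1[of a i] order_less_le_trans[OF zero_less_one yseq_ge_1]
    by (intro divide_le_posI_ennreal) auto
  thus ?thesis using enn2real_mono[of "1 / yseq a i" 1] by simp
qed

theorem lemma7p2:
  fixes a :: "nat \<Rightarrow> ennreal" and s :: "nat \<Rightarrow> real" and c :: real
  assumes s_nonneg: "\<And>i. s i \<ge> 0"
    and c_pos: "c > 0"
    and h1: "\<And>i. a (Suc i) \<ge> ennreal c * (yseq a i)\<^sup>2 * ennreal (s i) / 2"
    and h2: "\<And>i. ennreal (s i) \<le> 1 / yseq a i"
  shows "tseq s (Iblow a) \<le> ennreal (2 + 4 / c)"
proof -
  define K where "K = 2 + 4 / c"
  define u where "u i = enn2real (1 / yseq a i)" for i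
  have "s i \<le> K * (u i - u (Suc i))" for i
    unfolding K_def u_def yseq_Suc
    using decrement_inverse_ge_ennreal[OF yseq_ge_1 s_nonneg c_pos h1 h2] .
  then have "(\<Sum>j<n. s j) \<le> K * (u 0 - u n)" for n by (rule sum_le_telescope)
  moreover have "K * (u 0 - u n) \<le> K" for n
  proof (rule mult_left_le)
    show "u 0 - u n \<le> 1"
      using enn2real_inverse_yseq_le_1[of a 0] enn2real_nonneg[of "1 / yseq a n"]
      unfolding u_def by linarith
  qed (use c_pos in \<open>simp add: K_def\<close>)
  ultimately have "(\<Sum>j<n. s j) \<le> K" for n by (rule order_trans)
  then have "(\<Sum>j<n. ennreal (s j)) \<le> ennreal K" for n
    using s_nonneg by (simp add: sum_ennreal ennreal_leI)
  then have "(\<Sum>j. ennreal (s j)) \<le> ennreal K" by (intro suminf_le_const summableI)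
  with tseq_le_suminf show ?thesis unfolding K_def by (rule order_trans)
qed

end
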